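(* For any $\mathbf{x}_i\in\chi$ and any $\mathbf{x}\in\mathcal{D}_{i,\mathrm{DP}}$: (i) $\mathcal{D}_{i,\mathrm{DP}}\subseteq\mathcal{D}_{i,\mathrm{ML}}$; (ii) $\|\mathbf{x}-\mathbf{y}\|\ge\|\mathbf{x}_i-\mathbf{x}_j\|$ for every $\mathbf{x}_j\in\chi$ and every $\mathbf{y}\in\mathcal{D}_{j,\mathrm{DP}}$; (iii) $\|\mathbf{x}-\mathbf{x}_j\|\ge\|\mathbf{x}_i-\mathbf{x}_j\|$ for every $\mathbf{x}_j\in\chi$, with equality (for $\mathbf{x}_j\neq\mathbf{x}_i$) only when $\mathbf{x}=\mathbf{x}_i$.
   Context: A constellation is a finite set $\chi=\{\mathbf{x}_1,\dots,\mathbf{x}_M\}\subset\mathbb{R}^2$ of distinct points, $M\ge 3$, not all lying on one line. The Voronoi region of $\mathbf{x}_i$ is $\mathcal{D}_{i,\mathrm{ML}}=\{\mathbf{x}\in\mathbb{R}^2:\|\mathbf{x}-\mathbf{x}_i\|\le\|\mathbf{x}-\mathbf{x}_j\|\ \forall j\}$. Two distinct points $\mathbf{x}_i,\mathbf{x}_j$ are neighbors if their Voronoi regions share an edge (a common boundary segment or ray of positive length); $\mathcal{S}_i$ denotes the set of neighbors of $\mathbf{x}_i$. The distance preserving constructive interference region (DPCIR) of $\mathbf{x}_i$ is $\mathcal{D}_{i,\mathrm{DP}}=\{\mathbf{x}\in\mathbb{R}^2:(\mathbf{x}_i-\mathbf{x}_j)^T\mathbf{x}\ge(\mathbf{x}_i-\mathbf{x}_j)^T(\mathbf{x}_i+\mathbf{x}_j)/2+\|\mathbf{x}_i-\mathbf{x}_j\|^2/2\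 \forall\mathbf{x}_j\in\mathcal{S}_i\}$, equivalently $\{\mathbf{x}:(\mathbf{x}_i-\mathbf{x}_j)^T(\mathbf{x}-\mathbf{x}_i)\ge 0\ \forall\mathbf{x}_j\in\mathcal{S}_i\}$. *)

theory Defs
  imports "HOL-Analysis.Analysis"
begin

definition constellation :: "(real^2) set \<Rightarrow> bool" where
  "constellation C \<longleftrightarrow> finite C \<and> card C \<ge> 3 \<and> \<not> collinear C"

text \<open>Voronoi (ML decision) region of \<open>xi\<close>.\<close>
definition voronoi :: "(real^2) set \<Rightarrow> real^2 \<Rightarrow> (real^2) set" where
  "voronoi C xi = {x. \<forall>xj\<in>C. norm (x - xi) \<le> norm (x - xj)}"

text \<open>Neighbors: distinct points whose Voronoi regions share a boundary segment
  (or ray) of positive length, i.e. the common part contains a non-degenerate segment.\<close>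
definition neighbors :: "(real^2) set \<Rightarrow> real^2 \<Rightarrow> (real^2) set" where
  "neighbors C xi = {xj \<in> C. xj \<noteq> xi \<and>
      (\<exists>a b. a \<noteq> b \<and> closed_segment a b \<subseteq> voronoi C xi \<inter> voronoi C xj)}"

text \<open>Distance preserving constructive interference region.\<close>
definition dpcir :: "(real^2) set \<Rightarrow> real^2 \<Rightarrow> (real^2) set" where
  "dpcir C xi = {x. \<forall>xj\<in>neighbors C xi.
      (xi - xj) \<bullet> x \<ge> (xi - xj) \<bullet> (xi + xj) / 2 + (norm (xi - xj))\<^sup>2 / 2}"

end

theory Submission
  imports Defs
begin

text \<open>
  The Voronoi region of a point of a finite planar constellation is a full-dimensional polygon,
  and every edge of it lies on the bisector between the point and one of its neighbors. Hence
  the region is already cut out by the neighbor half-planes alone, and a direction \<open>d\<close> with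
  \<open>(xi - xj) \<bullet> d \<ge> 0\<close> for all neighbors \<open>xj\<close> keeps the whole ray from \<open>xi\<close> inside it, which forces
  \<open>(xi - xj) \<bullet> d \<ge> 0\<close> for every point \<open>xj\<close> of the constellation. So every \<open>x\<close> in the DPCIR
  of \<open>xi\<close> satisfies \<open>(xi - xj) \<bullet> (x - xi) \<ge> 0\<close> for all \<open>xj\<close>, and the three claims follow from
  the expansion of \<open>norm (x - xj)\<^sup>2\<close> around \<open>xi\<close> and from Cauchy-Schwarz.
\<close>

lemma norm_diff_le_iff_bisector:
  fixes x p q :: "'a::real_inner"
  shows "norm (x - p) \<le> norm (x - q) \<longleftrightarrow> (q - p) \<bullet> x \<le> (norm q ^ 2 - norm p ^ 2) / 2"
  unfolding norm_le by (simp add: power2_norm_eq_inner algebra_simps inner_commute)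

lemma norm_diff_eq_iff_bisector:
  fixes x p q :: "'a::real_inner"
  shows "norm (x - p) = norm (x - q) \<longleftrightarrow> (q - p) \<bullet> x = (norm q ^ 2 - norm p ^ 2) / 2"
  unfolding norm_eq by (simp add: power2_norm_eq_inner algebra_simps inner_commute)

lemma power2_norm_diff_split:
  fixes x y z :: "'a::real_inner"
  shows "norm (x - z) ^ 2 = norm (x - y) ^ 2 + 2 * ((y - z) \<bullet> (x - y)) + norm (y - z) ^ 2"
proof -
  have "(x - y) \<bullet> (y - z) = (norm (x - z) ^ 2 - norm (x - y) ^ 2 - norm (y - z) ^ 2) / 2"
    using dot_norm[of "x - y" "y - z"] by simp
  then show ?thesis
    by (simp add: inner_commute)
qed

lemma norm_diff_le_if_inner_nonneg:
  fixes x y z :: "'a::real_inner"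
  assumes "0 \<le> (y - z) \<bullet> (x - y)"
  shows "norm (x - y) \<le> norm (x - z)" and "norm (y - z) \<le> norm (x - z)"
proof -
  have "norm (x - y) ^ 2 \<le> norm (x - z) ^ 2" "norm (y - z) ^ 2 \<le> norm (x - z) ^ 2"
    using power2_norm_diff_split[of x z y] assms zero_le_power2[of "norm (x - y)"]
      zero_le_power2[of "norm (y - z)"] by linarith+
  then show "norm (x - y) \<le> norm (x - z)" "norm (y - z) \<le> norm (x - z)"
    by (meson norm_ge_zero power2_le_imp_le)+
qed

lemma parallel_if_orthogonal_to_same_2:
  fixes a n d :: "'a::euclidean_space"
  assumes "DIM('a) = 2" "d \<noteq> 0" "n \<noteq> 0" "d \<bullet> a = 0" "d \<bullet> n = 0"
  shows "\<exists>c. a = c *\<^sub>R n"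
proof -
  let ?H = "{x. d \<bullet> x = 0}"
  have "span {n} \<subseteq> ?H"
    using assms(5) by (intro span_minimal) (auto simp: subspace_hyperplane)
  moreover have "dim ?H \<le> dim (span {n})"
    using assms by (simp add: dim_hyperplane)
  ultimately have "span {n} = ?H"
    by (intro subspace_dim_equal) (auto simp: subspace_hyperplane)
  then show ?thesis
    using assms(4) by (auto simp: span_singleton)
qed

lemma voronoi_eq_Inter_halfspaces:
  "voronoi C xi = (\<Inter>xj\<in>C. {x. (xj - xi) \<bullet> x \<le> (norm xj ^ 2 - norm xi ^ 2) / 2})"
  unfolding voronoi_def using norm_diff_le_iff_bisector by auto

lemma polyhedron_voronoi: "finite C \<Longrightarrow> polyhedron (voronoi C xi)"
  unfolding voronoi_eq_Inter_halfspaces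
  by (intro polyhedron_Inter) (auto simp only: intro: polyhedron_halfspace_le)

lemma interior_voronoiI:
  assumes "finite C" and "\<And>xj. xj \<in> C \<Longrightarrow> xj \<noteq> xi \<Longrightarrow> norm (x - xi) < norm (x - xj)"
  shows "x \<in> interior (voronoi C xi)"
proof -
  let ?U = "\<Inter>xj\<in>C - {xi}. {y. norm (y - xi) < norm (y - xj)}"
  have "open ?U"
    using assms(1) by (intro open_INT) (auto intro!: open_Collect_less continuous_intros)
  moreover have "x \<in> ?U" "?U \<subseteq> voronoi C xi"
    using assms(2) by (auto simp: voronoi_def intro: less_imp_le)
  ultimately show ?thesis
    by (meson interior_maximal subsetD)
qed

lemma center_in_interior_voronoi: "finite C \<Longrightarrow> xi \<in> interior (voronoi C xi)"
  by (rule interior_voronoiI) auto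

lemma aff_dim_voronoi: "finite C \<Longrightarrow> aff_dim (voronoi C (xi :: real^2)) = 2"
  using aff_dim_nonempty_interior center_in_interior_voronoi by fastforce

lemma facet_of_disjoint_interior:
  fixes K S :: "'a::euclidean_space set"
  assumes "K facet_of S"
  shows "K \<inter> interior S = {}"
  using assms face_of_disjoint_interior unfolding facet_of_def by fastforce

lemma voronoi_boundary_on_bisector:
  assumes "finite C" and "x \<in> voronoi C xi" and "x \<notin> interior (voronoi C xi)"
  obtains xj where "xj \<in> C" "xj \<noteq> xi" "norm (x - xi) = norm (x - xj)"
proof -
  have "\<not> (\<forall>xj\<in>C. xj \<noteq> xi \<longrightarrow> norm (x - xi) < norm (x - xj))"
    using assms interior_voronoiI by blast
  then show ?thesis
    using assms(2) that by (auto simp: voronoi_def order_le_less)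
qed

lemma neighborsI_convex_subset:
  assumes "convex K" and "K \<subseteq> voronoi C xi" and "xj \<in> C" "xj \<noteq> xi"
    and "p \<in> K" "q \<in> K" "p \<noteq> q"
    and "norm (p - xi) = norm (p - xj)" "norm (q - xi) = norm (q - xj)"
  shows "xj \<in> neighbors C xi"
proof -
  define B where "B = {x. norm (x - xi) = norm (x - xj)}"
  have "convex B"
    unfolding B_def norm_diff_eq_iff_bisector by (rule convex_hyperplane)
  then have "closed_segment p q \<subseteq> K \<inter> B"
    using assms by (intro closed_segment_subset convex_Int) (auto simp: B_def)
  moreover have "K \<inter> B \<subseteq> voronoi C xj"
    using assms(2) by (auto simp: B_def voronoi_def)
  ultimately show ?thesis
    using assms unfolding neighbors_def by blast
qed

lemma facet_of_voronoi_in_bisector: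
  fixes C :: "(real^2) set"
  assumes fin: "finite C" and facet: "K facet_of voronoi C xi"
  obtains xj p q where "xj \<in> neighbors C xi" "p \<in> K" "q \<in> K" "p \<noteq> q"
    "norm (p - xi) = norm (p - xj)" "norm (q - xi) = norm (q - xj)"
proof -
  define B where "B xj = {x. norm (x - xi) = norm (x - xj)}" for xj
  have "K face_of voronoi C xi"
    using facet by (simp add: facet_of_def)
  then have convK: "convex K" and KV: "K \<subseteq> voronoi C xi"
    by (auto dest: face_of_imp_subset face_of_imp_convex)
  obtain p where p: "p \<in> K"
    using facet by (auto simp: facet_of_def)
  have "aff_dim K = 1"
    using facet aff_dim_voronoi[OF fin] by (simp add: facet_of_def)
  then have "K \<noteq> {p}"
    by auto
  then obtain q where "q \<in> K" "q \<noteq> p"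
    using p by blast
  then have "closed_segment p q \<subseteq> K" and "infinite (closed_segment p q)"
    using p convK closed_segment_subset by auto
  then have "infinite K"
    using finite_subset by blast
  \<comment> \<open>finitely many bisectors cover the infinite facet, so one of them meets it in two points\<close>
  moreover have "K \<subseteq> (\<Union>xj\<in>C - {xi}. K \<inter> B xj)"
  proof
    fix x assume "x \<in> K"
    then have "x \<in> voronoi C xi" "x \<notin> interior (voronoi C xi)"
      using facet_of_disjoint_interior[OF facet] KV by auto
    then obtain xj where "xj \<in> C" "xj \<noteq> xi" "norm (x - xi) = norm (x - xj)"
      by (rule voronoi_boundary_on_bisector[OF fin])
    with \<open>x \<in> K\<close> show "x \<in> (\<Union>xj\<in>C - {xi}. K \<inter> B xj)"
      by (auto simp: B_def)
  qed
  ultimately have "infinite (\<Union>xj\<in>C - {xi}. K \<inter> B xj)"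
    using finite_subset by blast
  then obtain xj where xj: "xj \<in> C - {xi}" and inf: "infinite (K \<inter> B xj)"
    using fin by (meson finite_Diff finite_UN_I)
  obtain p' where p': "p' \<in> K \<inter> B xj"
    using inf by (metis ex_in_conv finite.emptyI)
  obtain q' where "q' \<in> K \<inter> B xj - {p'}"
    using inf by (metis ex_in_conv finite.emptyI infinite_remove)
  then have pq': "p' \<in> K \<inter> B xj" "q' \<in> K \<inter> B xj" "p' \<noteq> q'"
    using p' by auto
  with xj convK KV show ?thesis
    by (intro that[of xj p' q'] neighborsI_convex_subset[of K]) (auto simp: B_def)
qed

lemma facet_halfspace_of_voronoi:
  fixes C :: "(real^2) set" and a :: "real^2"
  assumes fin: "finite C" and Vh: "voronoi C xi \<subseteq> {x. a \<bullet> x \<le> b}"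
    and facet: "voronoi C xi \<inter> {x. a \<bullet> x = b} facet_of voronoi C xi"
  obtains xj where "xj \<in> neighbors C xi"
    and "{x. norm (x - xi) \<le> norm (x - xj)} \<subseteq> {x. a \<bullet> x \<le> b}"
proof -
  obtain xj p q where xj: "xj \<in> neighbors C xi" and pq: "a \<bullet> p = b" "a \<bullet> q = b" "p \<noteq> q"
    and bisector: "norm (p - xi) = norm (p - xj)" "norm (q - xi) = norm (q - xj)"
    using facet_of_voronoi_in_bisector[OF fin facet] by blast
  define n where "n = xj - xi"
  define c where "c = (norm xj ^ 2 - norm xi ^ 2) / 2"
  have "n \<noteq> 0"
    using xj by (simp add: n_def neighbors_def)
  have np: "n \<bullet> p = c" "n \<bullet> q = c"
    using bisector by (simp_all add: n_def c_def norm_diff_eq_iff_bisector)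
  have "(q - p) \<bullet> a = 0" "(q - p) \<bullet> n = 0"
    using pq np by (simp_all add: inner_diff_left inner_commute[of p] inner_commute[of q])
  \<comment> \<open>supporting line and bisector share two points, hence parallel normals; \<open>xi\<close> fixes the sign\<close>
  then obtain lam where a: "a = lam *\<^sub>R n"
    using parallel_if_orthogonal_to_same_2[of "q - p" n a] \<open>n \<noteq> 0\<close> pq(3) by auto
  have b: "b = lam * c"
    using pq(1) np(1) a by simp
  have "xi \<in> voronoi C xi" "xi \<notin> voronoi C xi \<inter> {x. a \<bullet> x = b}"
    using center_in_interior_voronoi[OF fin] facet_of_disjoint_interior[OF facet] interior_subset
    by blast+
  then have "a \<bullet> xi < b"
    using Vh by fastforce
  moreover have "n \<bullet> xi < c"
    using norm_diff_le_iff_bisector[of xi xi xj] norm_diff_eq_iff_bisector[of xi xi xj] \<open>n \<noteq> 0\<close>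
    unfolding n_def c_def by auto
  ultimately have "lam > 0"
    using a b by (smt (verit, best) inner_scaleR_left mult_le_cancel_left)
  have "a \<bullet> x \<le> b" if "norm (x - xi) \<le> norm (x - xj)" for x
  proof -
    have "n \<bullet> x \<le> c"
      using that by (simp add: norm_diff_le_iff_bisector n_def c_def)
    then show ?thesis
      using \<open>lam > 0\<close> a b by (simp add: mult_left_mono)
  qed
  with xj show ?thesis
    using that by blast
qed

theorem voronoi_eq_neighbor_halfspaces:
  fixes C :: "(real^2) set"
  assumes fin: "finite C"
  shows "voronoi C xi = {x. \<forall>xj\<in>neighbors C xi. norm (x - xi) \<le> norm (x - xj)}"
proof
  show "voronoi C xi \<subseteq> {x. \<forall>xj\<in>neighbors C xi. norm (x - xi) \<le> norm (x - xj)}"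
    unfolding voronoi_def neighbors_def by auto
  obtain F where "finite F" and V: "voronoi C xi = affine hull voronoi C xi \<inter> \<Inter>F"
    and "\<And>h. h \<in> F \<Longrightarrow> \<exists>a b. a \<noteq> 0 \<and> h = {x. a \<bullet> x \<le> b}"
    and minimal: "\<And>F'. F' \<subset> F \<Longrightarrow> voronoi C xi \<subset> affine hull voronoi C xi \<inter> \<Inter>F'"
    using polyhedron_voronoi[OF fin] by (simp add: polyhedron_Int_affine_minimal) meson
  then obtain a b where ab: "\<And>h. h \<in> F \<Longrightarrow> a h \<noteq> 0 \<and> h = {x. a h \<bullet> x \<le> b h}"
    by metis
  have hull: "affine hull voronoi C xi = UNIV"
    using affine_hull_nonempty_interior center_in_interior_voronoi[OF fin] by blast
  show "{x. \<forall>xj\<in>neighbors C xi. norm (x - xi) \<le> norm (x - xj)} \<subseteq> voronoi C xi"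
  proof
    fix z assume z: "z \<in> {x. \<forall>xj\<in>neighbors C xi. norm (x - xi) \<le> norm (x - xj)}"
    have "z \<in> h" if h: "h \<in> F" for h
    proof -
      have "voronoi C xi \<subseteq> {x. a h \<bullet> x \<le> b h}"
        using V ab h by blast
      moreover have "voronoi C xi \<inter> {x. a h \<bullet> x = b h} facet_of voronoi C xi"
        using facet_of_polyhedron_explicit[OF \<open>finite F\<close> V ab minimal] h by blast
      ultimately obtain xj where "xj \<in> neighbors C xi"
        and "{x. norm (x - xi) \<le> norm (x - xj)} \<subseteq> {x. a h \<bullet> x \<le> b h}"
        by (rule facet_halfspace_of_voronoi[OF fin])
      then show ?thesis
        using z ab h by blast
    qed
    then show "z \<in> voronoi C xi"
      using V hull by blast
  qed
qed

lemma dpcir_eq: "dpcir C xi = {x. \<forall>xj\<in>neighbors C xi. 0 \<le> (xi - xj) \<bullet> (x - xi)}"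
proof -
  have "(xi - xj) \<bullet> (xi + xj) / 2 + (norm (xi - xj))\<^sup>2 / 2 = (xi - xj) \<bullet> xi" for xj :: "real^2"
    by (simp add: power2_norm_eq_inner inner_diff_left inner_diff_right inner_add_right
        inner_commute field_simps)
  then show ?thesis
    unfolding dpcir_def by (simp add: inner_diff_right)
qed

lemma inner_nonneg_if_neighbors:
  fixes C :: "(real^2) set"
  assumes fin: "finite C" and xj: "xj \<in> C"
    and d: "\<forall>xk\<in>neighbors C xi. 0 \<le> (xi - xk) \<bullet> d"
  shows "0 \<le> (xi - xj) \<bullet> d"
proof (rule ccontr)
  define k where "k = (xi - xj) \<bullet> d"
  assume "\<not> 0 \<le> (xi - xj) \<bullet> d"
  then have "k < 0"
    by (simp add: k_def)
  have ray: "xi + t *\<^sub>R d \<in> voronoi C xi" if "t \<ge> 0" for t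
    unfolding voronoi_eq_neighbor_halfspaces[OF fin]
  proof (intro CollectI ballI)
    fix xk assume "xk \<in> neighbors C xi"
    then have "0 \<le> (xi - xk) \<bullet> (xi + t *\<^sub>R d - xi)"
      using d that by simp
    then show "norm (xi + t *\<^sub>R d - xi) \<le> norm (xi + t *\<^sub>R d - xk)"
      by (rule norm_diff_le_if_inner_nonneg(1))
  qed
  define t where "t = (norm (xi - xj) ^ 2 + 1) / (- 2 * k)"
  define y where "y = xi + t *\<^sub>R d"
  have "t \<ge> 0"
    unfolding t_def using \<open>k < 0\<close> by (intro divide_nonneg_pos) auto
  then have "norm (y - xi) \<le> norm (y - xj)"
    using ray xj unfolding voronoi_def y_def by blast
  then have "norm (y - xi) ^ 2 \<le> norm (y - xj) ^ 2"
    by (simp add: power_mono)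
  moreover have "(xi - xj) \<bullet> (y - xi) = t * k"
    by (simp add: y_def k_def)
  moreover have "2 * (t * k) = - (norm (xi - xj) ^ 2 + 1)"
    using \<open>k < 0\<close> by (simp add: t_def field_simps)
  ultimately show False
    using power2_norm_diff_split[of y xj xi] by linarith
qed

lemma dpcir_inner_nonneg:
  fixes C :: "(real^2) set"
  assumes "finite C" and "x \<in> dpcir C xi" and "xj \<in> C"
  shows "0 \<le> (xi - xj) \<bullet> (x - xi)"
  using assms inner_nonneg_if_neighbors unfolding dpcir_eq by blast

lemma dpcir_subset_voronoi:
  fixes C :: "(real^2) set"
  assumes "finite C"
  shows "dpcir C xi \<subseteq> voronoi C xi"
proof
  fix x assume "x \<in> dpcir C xi"
  then have "norm (x - xi) \<le> norm (x - xj)" if "xj \<in> C" for xj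
    using dpcir_inner_nonneg[OF assms _ that] by (intro norm_diff_le_if_inner_nonneg(1))
  then show "x \<in> voronoi C xi"
    by (simp add: voronoi_def)
qed

lemma dpcir_dist_point:
  fixes C :: "(real^2) set"
  assumes "finite C" and "x \<in> dpcir C xi" and "xj \<in> C"
  shows "norm (xi - xj) \<le> norm (x - xj)"
    and "norm (x - xj) = norm (xi - xj) \<Longrightarrow> x = xi"
proof -
  have k: "0 \<le> (xi - xj) \<bullet> (x - xi)"
    using dpcir_inner_nonneg[OF assms] .
  then show "norm (xi - xj) \<le> norm (x - xj)"
    by (rule norm_diff_le_if_inner_nonneg(2))
  assume "norm (x - xj) = norm (xi - xj)"
  then have "norm (x - xi) ^ 2 + 2 * ((xi - xj) \<bullet> (x - xi)) = 0"
    using power2_norm_diff_split[of x xj xi] by simp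
  with k have "norm (x - xi) ^ 2 \<le> 0"
    by linarith
  then show "x = xi"
    by simp
qed

lemma dpcir_dist_dpcir:
  fixes C :: "(real^2) set"
  assumes fin: "finite C" and "xi \<in> C" "xj \<in> C" and "x \<in> dpcir C xi" "y \<in> dpcir C xj"
  shows "norm (xi - xj) \<le> norm (x - y)"
proof -
  define n where "n = xi - xj"
  have "n \<bullet> (x - y) = n \<bullet> (x - xi) + n \<bullet> n + (xj - xi) \<bullet> (y - xj)"
    unfolding n_def by (simp add: algebra_simps inner_commute)
  moreover have "0 \<le> n \<bullet> (x - xi)" "0 \<le> (xj - xi) \<bullet> (y - xj)"
    using dpcir_inner_nonneg[OF fin] assms n_def by blast+
  ultimately have "norm n * norm n \<le> n \<bullet> (x - y)"
    by (simp add: dot_square_norm power2_eq_square)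
  also have "\<dots> \<le> norm n * norm (x - y)"
    by (rule norm_cauchy_schwarz)
  finally show ?thesis
    unfolding n_def by (cases "xi = xj") (auto simp: mult_le_cancel_left)
qed

theorem mainTheorem5:
  fixes C :: "(real^2) set" and xi x :: "real^2"
  assumes "constellation C" and "xi \<in> C" and "x \<in> dpcir C xi"
  shows "dpcir C xi \<subseteq> voronoi C xi
    \<and> (\<forall>xj\<in>C. \<forall>y\<in>dpcir C xj. norm (x - y) \<ge> norm (xi - xj))
    \<and> (\<forall>xj\<in>C. norm (x - xj) \<ge> norm (xi - xj)
          \<and> (xj \<noteq> xi \<and> norm (x - xj) = norm (xi - xj) \<longrightarrow> x = xi))"
proof -
  have fin: "finite C"
    using assms(1) by (simp add: constellation_def)
  have "\<forall>xj\<in>C. \<forall>y\<in>dpcir C xj. norm (x - y) \<ge> norm (xi - xj)"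
    using dpcir_dist_dpcir[OF fin assms(2) _ assms(3)] by blast
  moreover have "\<forall>xj\<in>C. norm (x - xj) \<ge> norm (xi - xj)
      \<and> (xj \<noteq> xi \<and> norm (x - xj) = norm (xi - xj) \<longrightarrow> x = xi)"
    using dpcir_dist_point[OF fin assms(3)] by blast
  ultimately show ?thesis
    using dpcir_subset_voronoi[OF fin] by blast
qed

end
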